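(* Let $K$ be a non-Archimedean local field, and for $n\ge1$ let $C_n$ and $S_n$ be the operators on $L^2(K)$ defined in the context. Then $C_n$ and $S_n$ commute, so the orthogonal projection $D_n$ onto $\mathcal D_n=\mathcal C_n\cap\mathcal S_n$ is given by $D_n=C_nS_n=S_nC_n$.
   Context: $K$ is a non-discrete, totally disconnected, locally compact field with canonical (ultrametric) absolute value $|\cdot|$, $O=\{x:|x|\le1\}$, $q$ the cardinality of the residue field, $\beta$ a uniformizer ($|\beta|=q^{-1}$), $B_n=\beta^{-n}O=\{x:|x|\le q^n\}$, and $dx$ the Haar measure with $\mu(O)=1$. $\mathcal C_n=\{f\in L^2(K): f=0\text{ a.e. outside }B_n\}$ with orthogonal projection $C_nf=\mathbf 1_{B_n}f$; $\mathcal S_n=\{f\in L^2(K): f(x+h)=f(x)\ \forall h\in B_{-n}\}$ with orthogonal projection $(S_nf)(x)=q^n\int_{B_{-n}}f(x+y)\,dy$. *)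

theory Defs
  imports "HOL-Analysis.Analysis"
begin

definition ring_of_integers :: "('a \<Rightarrow> real) \<Rightarrow> 'a set" where
  "ring_of_integers absv = {x. absv x \<le> 1}"

definition residue_rel :: "('a::ab_group_add \<Rightarrow> real) \<Rightarrow> ('a \<times> 'a) set" where
  "residue_rel absv = {(x, y). x \<in> ring_of_integers absv \<and> y \<in> ring_of_integers absv
                               \<and> absv (x - y) < 1}"

definition nonarch_local_field ::
  "('a::{field, metric_space} \<Rightarrow> real) \<Rightarrow> 'a measure \<Rightarrow> nat \<Rightarrow> 'a \<Rightarrow> bool" where
  "nonarch_local_field absv M q \<beta> \<longleftrightarrow>
     \<comment> \<open>topology is the one given by the absolute value\<close>
     (\<forall>x y. dist x y = absv (x - y)) \<and>
     \<comment> \<open>non-discrete\<close>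
     \<not> open {0::'a} \<and>
     \<comment> \<open>locally compact\<close>
     (\<forall>x::'a. \<exists>U. open U \<and> x \<in> U \<and> compact (closure U)) \<and>
     \<comment> \<open>totally disconnected\<close>
     (\<forall>S::'a set. connected S \<longrightarrow> (\<exists>a. S \<subseteq> {a})) \<and>
     \<comment> \<open>ultrametric, multiplicative absolute value\<close>
     (\<forall>x y. absv (x * y) = absv x * absv y) \<and>
     (\<forall>x y. absv (x + y) \<le> max (absv x) (absv y)) \<and>
     \<comment> \<open>Haar measure on the Borel sets, normalised by mu(O) = 1\<close>
     sets M = sets borel \<and>
     (\<forall>A \<in> sets borel. \<forall>a. emeasure M ((\<lambda>x. a + x) ` A) = emeasure M A) \<and>
     (\<forall>A. compact A \<longrightarrow> emeasure M A < \<infinity>) \<and>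
     (\<forall>U. open U \<and> U \<noteq> {} \<longrightarrow> emeasure M U > 0) \<and>
     emeasure M (ring_of_integers absv) = 1 \<and>
     \<comment> \<open>canonical absolute value: modulus of multiplication\<close>
     (\<forall>A \<in> sets borel. \<forall>a. emeasure M ((\<lambda>x. a * x) ` A) = ennreal (absv a) * emeasure M A) \<and>
     \<comment> \<open>q = cardinality of the residue field O/P, beta a uniformizer\<close>
     finite (ring_of_integers absv // residue_rel absv) \<and>
     q = card (ring_of_integers absv // residue_rel absv) \<and>
     absv \<beta> = 1 / real q"

text \<open>B_k = beta^(-k) O = {x. |x| <= q^k}.\<close>
definition Bball :: "('a \<Rightarrow> real) \<Rightarrow> nat \<Rightarrow> int \<Rightarrow> 'a set" where
  "Bball absv q k = {x. absv x \<le> real q powi k}"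

definition L2 :: "'a measure \<Rightarrow> ('a \<Rightarrow> complex) \<Rightarrow> bool" where
  "L2 M f \<longleftrightarrow> f \<in> borel_measurable M \<and> integrable M (\<lambda>x. (cmod (f x))\<^sup>2)"

definition L2_inner :: "'a measure \<Rightarrow> ('a \<Rightarrow> complex) \<Rightarrow> ('a \<Rightarrow> complex) \<Rightarrow> complex" where
  "L2_inner M f g = (\<integral>x. f x * cnj (g x) \<partial>M)"

definition Cspace :: "('a \<Rightarrow> real) \<Rightarrow> 'a measure \<Rightarrow> nat \<Rightarrow> nat \<Rightarrow> ('a \<Rightarrow> complex) set" where
  "Cspace absv M q n = {f. L2 M f \<and> (AE x in M. x \<notin> Bball absv q (int n) \<longrightarrow> f x = 0)}"

definition Sspace :: "('a::ab_group_add \<Rightarrow> real) \<Rightarrow> 'a measure \<Rightarrow> nat \<Rightarrow> nat \<Rightarrow> ('a \<Rightarrow> complex) set" where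
  "Sspace absv M q n = {f. L2 M f \<and>
      (\<forall>h \<in> Bball absv q (- int n). AE x in M. f (x + h) = f x)}"

definition Cop :: "('a \<Rightarrow> real) \<Rightarrow> nat \<Rightarrow> nat \<Rightarrow> ('a \<Rightarrow> complex) \<Rightarrow> 'a \<Rightarrow> complex" where
  "Cop absv q n f = (\<lambda>x. indicator (Bball absv q (int n)) x * f x)"

definition Sop :: "('a::ab_group_add \<Rightarrow> real) \<Rightarrow> 'a measure \<Rightarrow> nat \<Rightarrow> nat
                   \<Rightarrow> ('a \<Rightarrow> complex) \<Rightarrow> 'a \<Rightarrow> complex" where
  "Sop absv M q n f = (\<lambda>x. complex_of_real (real q ^ n) *
                           (LINT y:Bball absv q (- int n)|M. f (x + y)))"

definition is_orth_proj :: "'a measure \<Rightarrow> (('a \<Rightarrow> complex) \<Rightarrow> 'a \<Rightarrow> complex)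
                            \<Rightarrow> ('a \<Rightarrow> complex) set \<Rightarrow> bool" where
  "is_orth_proj M P V \<longleftrightarrow>
     (\<forall>f. L2 M f \<longrightarrow> P f \<in> V \<and> (\<forall>g \<in> V. L2_inner M (\<lambda>x. f x - P f x) g = 0))"

end

theory Submission
  imports Defs
begin

(*
  For |y| <= q^-n <= q^n the ultrametric inequality gives x + y : B_n iff x : B_n, so
  multiplying by the indicator of B_n commutes with averaging over B_-n.
  The cosets of B_-n are ultrametric discs of equal positive measure; finitely many of them
  partition B_n, and C_n S_n f is the step function whose value on each of these discs is the
  mean of f over it, hence lies in C_n and S_n. Conversely, by Fubini a function that is a.e.
  invariant under each translation by B_-n is a.e. constant on each disc, so every g in C_n and
  S_n is a.e. such a step function; as f - C_n S_n f has mean zero on every disc, it is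
  orthogonal to g.
*)

lemma finite_if_disjoint_equal_measure:
  assumes sets: "F \<subseteq> sets M" and disj: "disjoint F" and sub: "\<And>E. E \<in> F \<Longrightarrow> E \<subseteq> A"
    and meas: "\<And>E. E \<in> F \<Longrightarrow> emeasure M E = ennreal c" and "c > 0"
    and "A \<in> sets M" "emeasure M A = ennreal a"
  shows "finite F"
proof (rule ccontr)
  assume "infinite F"
  define N where "N = nat \<lceil>a / c\<rceil> + 1"
  obtain S where S: "S \<subseteq> F" "finite S" "card S = N"
    using infinite_arbitrarily_large[OF \<open>infinite F\<close>] by blast
  have "ennreal (real N * c) = (\<Sum>E\<in>S. emeasure M E)"
    using S meas \<open>c > 0\<close> by (simp add: ennreal_of_nat_eq_real_of_nat ennreal_mult' subset_eq)
  also have "\<dots> = emeasure M (\<Union>S)"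
    using S sets disj by (intro sum_emeasure[where F=id, simplified]) (auto simp: disjoint_family_on_def disjoint_def, blast+)
  also have "\<dots> \<le> emeasure M A"
    using S sub \<open>A \<in> sets M\<close> by (intro emeasure_mono) auto
  finally have "real N * c \<le> a"
    using \<open>c > 0\<close> \<open>emeasure M A = ennreal a\<close>
    by (metis ennreal_le_iff2 ennreal_less_zero_iff linorder_not_le mult_pos_pos of_nat_0_less_iff add_gr_0 zero_less_one N_def)
  moreover have "a / c < real N"
    unfolding N_def by linarith
  then have "a < real N * c"
    using \<open>c > 0\<close> by (simp add: field_simps)
  ultimately show False by linarith
qed

lemma borel_measurable_cnj [measurable (raw)]:
  "f \<in> borel_measurable M \<Longrightarrow> (\<lambda>x. cnj (f x)) \<in> borel_measurable M"
  by (rule measurable_compose[OF _ borel_measurable_continuous_onI]) (auto intro: continuous_intros)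

lemma L2_integrable_indicator_mult:
  fixes f :: "'a \<Rightarrow> complex"
  assumes "L2 M f" "E \<in> sets M" "emeasure M E < \<infinity>"
  shows "integrable M (\<lambda>x. indicator E x * f x)"
proof (rule Bochner_Integration.integrable_bound)
  have [measurable]: "f \<in> borel_measurable M" "E \<in> sets M"
    using assms by (simp_all add: L2_def)
  show "integrable M (\<lambda>x. indicator E x + (cmod (f x))\<^sup>2 :: real)"
    using assms by (intro Bochner_Integration.integrable_add) (auto simp: L2_def)
  show "(\<lambda>x. indicator E x * f x) \<in> borel_measurable M" by measurable
  have "cmod (f x) \<le> 1 + (cmod (f x))\<^sup>2" for x
  proof -
    have "0 \<le> (cmod (f x) - 1)\<^sup>2" by simp
    then have "2 * cmod (f x) \<le> 1 + (cmod (f x))\<^sup>2"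
      by (simp add: power2_eq_square algebra_simps)
    then show ?thesis
      using norm_ge_zero[of "f x"] by linarith
  qed
  then show "AE x in M. norm (indicator E x * f x) \<le> norm (indicator E x + (cmod (f x))\<^sup>2 :: real)"
    by (auto simp: indicator_def norm_mult)
qed

definition mean_on :: "'a measure \<Rightarrow> ('a \<Rightarrow> complex) \<Rightarrow> 'a set \<Rightarrow> complex" where
  "mean_on M f E = (LINT z:E|M. f z) / measure M E"

lemma integral_deviation_from_mean:
  fixes f :: "'a \<Rightarrow> complex"
  assumes f: "integrable M (\<lambda>x. indicator E x * f x)"
    and E: "E \<in> sets M" "emeasure M E < \<infinity>" "measure M E \<noteq> 0"
  shows "integrable M (\<lambda>x. indicator E x * ((f x - mean_on M f E) * k))"
    and "(\<integral>x. indicator E x * ((f x - mean_on M f E) * k) \<partial>M) = 0"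
proof -
  let ?c = "mean_on M f E"
  have ind: "integrable M (\<lambda>x. complex_of_real (indicator E x))"
    using E by (intro integrable_of_real) auto
  have eq: "(\<lambda>x. indicator E x * ((f x - ?c) * k)) =
      (\<lambda>x. k * (indicator E x * f x) - (k * ?c) * complex_of_real (indicator E x))"
    by (auto simp: indicator_def algebra_simps)
  show "integrable M (\<lambda>x. indicator E x * ((f x - ?c) * k))"
    unfolding eq using f ind by auto
  have "(LINT z:E|M. f z) = (\<integral>x. indicator E x * f x \<partial>M)"
    unfolding set_lebesgue_integral_def
    by (intro Bochner_Integration.integral_cong) (auto simp: indicator_def)
  then show "(\<integral>x. indicator E x * ((f x - ?c) * k) \<partial>M) = 0"
    unfolding eq using f ind E by (simp add: mean_on_def algebra_simps)
qed

locale ultrametric_absv =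
  fixes absv :: "'a::field \<Rightarrow> real"
  assumes absv_nonneg: "absv x \<ge> 0"
    and absv_eq_0_iff: "absv x = 0 \<longleftrightarrow> x = 0"
    and absv_mult: "absv (x * y) = absv x * absv y"
    and absv_add_le_max: "absv (x + y) \<le> max (absv x) (absv y)"
begin

lemma absv_0 [simp]: "absv 0 = 0"
  using absv_eq_0_iff by simp

lemma absv_1 [simp]: "absv 1 = 1"
  using absv_mult[of 1 1] absv_eq_0_iff[of 1] by simp

lemma absv_minus: "absv (- x) = absv x"
proof -
  have "absv (- 1) * absv (- 1) = 1"
    using absv_mult[of "- 1" "- 1"] by simp
  then have "absv (- 1) = 1"
    using absv_nonneg[of "- 1"] by (metis abs_of_nonneg real_sqrt_abs2 real_sqrt_one power2_eq_square)
  then show ?thesis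
    using absv_mult[of "- 1" x] by simp
qed

lemma absv_minus_commute: "absv (x - y) = absv (y - x)"
  using absv_minus[of "x - y"] by simp

lemma absv_diff_le_max: "absv (x - y) \<le> max (absv x) (absv y)"
  using absv_add_le_max[of x "- y"] absv_minus[of y] by simp

lemma absv_inverse: "absv (inverse x) = inverse (absv x)"
  by (metis absv_1 absv_mult absv_eq_0_iff inverse_unique inverse_zero right_inverse)

lemma absv_power: "absv (x ^ k) = absv x ^ k"
  by (induction k) (simp_all add: absv_mult)

lemma absv_power_int: "absv (x powi k) = absv x powi k"
  by (simp add: power_int_def absv_power absv_inverse power_inverse)

definition disc :: "'a \<Rightarrow> real \<Rightarrow> 'a set" where
  "disc a r = {x. absv (x - a) \<le> r}"

lemma center_in_disc: "r \<ge> 0 \<Longrightarrow> a \<in> disc a r"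
  by (simp add: disc_def)

lemma disc_subset_disc:
  assumes "a \<in> disc b r" "s \<le> r"
  shows "disc a s \<subseteq> disc b r"
proof
  fix x
  assume "x \<in> disc a s"
  then show "x \<in> disc b r"
    using assms absv_add_le_max[of "x - a" "a - b"] by (simp add: disc_def)
qed

lemma disc_eq_if_mem: "b \<in> disc a r \<Longrightarrow> disc b r = disc a r"
  using disc_subset_disc[of b a r r] disc_subset_disc[of a b r r] absv_minus_commute[of a b]
  by (auto simp: disc_def)

lemma add_mem_disc_0_iff: "absv y \<le> r \<Longrightarrow> x + y \<in> disc 0 r \<longleftrightarrow> x \<in> disc 0 r"
  using absv_add_le_max[of x y] absv_diff_le_max[of "x + y" y] by (auto simp: disc_def)

end

locale local_field =
  fixes absv :: "'a::{field, metric_space} \<Rightarrow> real"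
    and M :: "'a measure" and q :: nat and \<beta> :: 'a
  assumes local_field: "nonarch_local_field absv M q \<beta>"
begin

lemma dist_eq_absv: "dist x y = absv (x - y)"
  using local_field by (simp add: nonarch_local_field_def)

sublocale ultrametric_absv absv
proof
  show "absv x \<ge> 0" for x
    using dist_eq_absv[of x 0] by (metis diff_zero zero_le_dist)
  show "absv x = 0 \<longleftrightarrow> x = 0" for x
    using dist_eq_absv[of x 0] by (metis diff_zero dist_eq_0_iff)
  show "absv (x * y) = absv x * absv y" "absv (x + y) \<le> max (absv x) (absv y)" for x y
    using local_field by (simp_all add: nonarch_local_field_def)
qed

lemma sets_M: "sets M = sets borel"
  using local_field by (simp add: nonarch_local_field_def)

lemma space_M: "space M = UNIV"
  using sets_eq_imp_space_eq[OF sets_M] by simp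

lemma emeasure_translate_image:
  "A \<in> sets borel \<Longrightarrow> emeasure M ((\<lambda>x. a + x) ` A) = emeasure M A"
  using local_field by (simp add: nonarch_local_field_def)

lemma emeasure_scale_image:
  "A \<in> sets borel \<Longrightarrow> emeasure M ((\<lambda>x. a * x) ` A) = ennreal (absv a) * emeasure M A"
  using local_field by (simp add: nonarch_local_field_def)

lemma emeasure_ring_of_integers: "emeasure M (ring_of_integers absv) = 1"
  using local_field by (simp add: nonarch_local_field_def)

lemma absv_uniformizer: "absv \<beta> = 1 / real q"
  using local_field by (simp add: nonarch_local_field_def)

lemma residue_field_card_ge_2: "q \<ge> 2"
proof -
  let ?O = "ring_of_integers absv" and ?r = "residue_rel absv"
  have "finite (?O // ?r)" "q = card (?O // ?r)"
    using local_field by (simp_all add: nonarch_local_field_def)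
  have "0 \<in> ?O" "1 \<in> ?O"
    by (auto simp: ring_of_integers_def)
  then have classes: "?r `` {0} \<in> ?O // ?r" "?r `` {1} \<in> ?O // ?r"
    by (auto simp: quotient_def)
  have "0 \<in> ?r `` {0}" "0 \<notin> ?r `` {1}"
    using \<open>0 \<in> ?O\<close> by (auto simp: residue_rel_def)
  then have "card {?r `` {0}, ?r `` {1}} = 2"
    by (metis card_2_iff)
  moreover have "card {?r `` {0}, ?r `` {1}} \<le> card (?O // ?r)"
    using classes \<open>finite (?O // ?r)\<close> by (intro card_mono) auto
  ultimately show ?thesis
    using \<open>q = card (?O // ?r)\<close> by simp
qed

definition rad :: "int \<Rightarrow> real" where
  "rad k = real q powi k"

lemma rad_pos: "rad k > 0"
  using residue_field_card_ge_2 by (simp add: rad_def)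

lemma rad_mono: "j \<le> k \<Longrightarrow> rad j \<le> rad k"
  using residue_field_card_ge_2 unfolding rad_def by (intro power_int_increasing) auto

lemma rad_less: "r > 0 \<Longrightarrow> \<exists>m::nat. rad (- int m) < r"
proof -
  assume "r > 0"
  then obtain m :: nat where "(1 / real q) ^ m < r"
    using real_arch_pow_inv[of r "1 / real q"] residue_field_card_ge_2 by auto
  moreover have "rad (- int m) = (1 / real q) ^ m"
    by (simp add: rad_def power_int_minus power_divide divide_inverse power_inverse)
  ultimately show ?thesis
    by metis
qed

lemma rad_ge: "\<exists>m::nat. x \<le> rad (int m)"
proof -
  obtain m :: nat where "x < 2 ^ m"
    using real_arch_pow[of 2 x] by auto
  also have "(2::real) ^ m \<le> real q ^ m"
    using residue_field_card_ge_2 by (intro power_mono) auto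
  finally show ?thesis
    by (auto simp: rad_def intro: less_imp_le)
qed

lemma center_in_rad_disc: "a \<in> disc a (rad k)"
  using rad_pos by (simp add: center_in_disc less_imp_le)

lemma Bball_eq_disc: "Bball absv q k = disc 0 (rad k)"
  by (simp add: Bball_def disc_def rad_def)

lemma disc_eq_cball: "disc a r = cball a r"
  by (auto simp: disc_def cball_def dist_eq_absv absv_minus_commute)

lemma sets_disc [measurable]: "disc a r \<in> sets M"
  unfolding disc_eq_cball sets_M by simp

lemma measurable_translate [measurable]: "(\<lambda>x. a + x) \<in> measurable M M"
proof -
  have "continuous_on UNIV (\<lambda>x. a + x)"
    unfolding continuous_on_iff by (auto simp: dist_eq_absv)
  then have "(\<lambda>x. a + x) \<in> borel_measurable borel"
    by (rule borel_measurable_continuous_onI)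
  then show ?thesis
    using measurable_cong_sets[OF sets_M sets_M] by simp
qed

lemma distr_translate: "distr M M (\<lambda>x. a + x) = M"
proof (rule measure_eqI)
  fix A assume "A \<in> sets (distr M M (\<lambda>x. a + x))"
  then have A: "A \<in> sets M" "A \<in> sets borel"
    using sets_M by simp_all
  have "(\<lambda>x. a + x) -` A \<inter> space M = (\<lambda>x. - a + x) ` A"
    by (force simp: space_M image_iff)
  then have "emeasure (distr M M (\<lambda>x. a + x)) A = emeasure M ((\<lambda>x. - a + x) ` A)"
    using emeasure_distr[OF measurable_translate A(1)] by simp
  also have "\<dots> = emeasure M A"
    by (rule emeasure_translate_image[OF A(2)])
  finally show "emeasure (distr M M (\<lambda>x. a + x)) A = emeasure M A" .
qed simp

lemma emeasure_disc: "emeasure M (disc a (rad k)) = rad k"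
proof -
  define c where "c = inverse \<beta> powi k"
  have "absv c = rad k"
    by (simp add: c_def absv_power_int absv_inverse absv_uniformizer rad_def)
  then have "c \<noteq> 0"
    using rad_pos[of k] by auto
  have "(\<lambda>x. c * x) ` disc 0 1 = disc 0 (rad k)"
  proof safe
    fix y assume "y \<in> disc 0 (rad k)"
    moreover have "absv (inverse c * y) = absv y / rad k"
      by (simp add: absv_mult absv_inverse \<open>absv c = rad k\<close> divide_inverse mult.commute)
    ultimately have "inverse c * y \<in> disc 0 1"
      using rad_pos[of k] by (simp add: disc_def)
    moreover have "y = c * (inverse c * y)"
      using \<open>c \<noteq> 0\<close> by simp
    ultimately show "y \<in> (\<lambda>x. c * x) ` disc 0 1"
      by blast
  qed (use rad_pos[of k] \<open>absv c = rad k\<close> in \<open>auto simp: disc_def absv_mult mult_left_le\<close>)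
  moreover have "(\<lambda>x. a + x) ` disc 0 (rad k) = disc a (rad k)"
    by (force simp: disc_def image_iff algebra_simps)
  moreover have "ring_of_integers absv = disc 0 1"
    by (simp add: disc_def ring_of_integers_def)
  ultimately show ?thesis
    using emeasure_translate_image[of "disc 0 (rad k)" a] emeasure_scale_image[of "disc 0 1" c]
      emeasure_ring_of_integers \<open>absv c = rad k\<close> sets_disc[unfolded sets_M]
    by simp
qed

lemma measure_disc: "measure M (disc a (rad k)) = rad k"
  using emeasure_disc rad_pos by (simp add: measure_def less_imp_le)

lemma finite_discs_in_disc: "j \<le> k \<Longrightarrow> finite ((\<lambda>a. disc a (rad j)) ` disc 0 (rad k))"
  by (rule finite_if_disjoint_equal_measure[where M=M and A="disc 0 (rad k)" and c="rad j" and a="rad k"])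
    (auto simp: disjoint_def emeasure_disc rad_pos rad_mono
      dest: disc_eq_if_mem disc_subset_disc[where s="rad j"])

lemma countable_discs: "countable (range (\<lambda>a. disc a (rad j)))"
proof -
  have "range (\<lambda>a. disc a (rad j)) = (\<Union>m::nat. (\<lambda>a. disc a (rad j)) ` disc 0 (rad (int m + \<bar>j\<bar>)))"
  proof -
    have "\<exists>m::nat. a \<in> disc 0 (rad (int m + \<bar>j\<bar>))" for a
    proof -
      obtain m :: nat where "absv a \<le> rad (int m)"
        using rad_ge by blast
      also have "\<dots> \<le> rad (int m + \<bar>j\<bar>)"
        by (rule rad_mono) simp
      finally show ?thesis
        by (auto simp: disc_def)
    qed
    then show ?thesis
      by blast
  qed
  then show ?thesis
    by (simp add: countable_finite finite_discs_in_disc)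
qed

lemma sigma_finite_M: "sigma_finite_measure M"
proof
  have "(\<Union>m::nat. disc 0 (rad (int m))) = UNIV"
    using rad_ge by (auto simp: disc_def)
  then show "\<exists>A. countable A \<and> A \<subseteq> sets M \<and> \<Union> A = space M \<and> (\<forall>a\<in>A. emeasure M a \<noteq> \<infinity>)"
    by (intro exI[of _ "range (\<lambda>m::nat. disc 0 (rad (int m)))"])
      (auto simp: space_M emeasure_disc)
qed

lemma add_preimage_open_eq_Union_disc_products:
  assumes "open S"
  shows "{p. fst p + snd p \<in> S} =
    \<Union>{disc x (rad (- int m)) \<times> disc y (rad (- int m)) | x y m.
        disc x (rad (- int m)) \<times> disc y (rad (- int m)) \<subseteq> {p. fst p + snd p \<in> S}}"
    (is "_ = \<Union>?G")
proof
  show "{p. fst p + snd p \<in> S} \<subseteq> \<Union>?G"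
  proof
    fix p :: "'a \<times> 'a"
    obtain x y where p: "p = (x, y)" by (cases p)
    assume "p \<in> {p. fst p + snd p \<in> S}"
    then obtain r where "r > 0" and r: "\<And>z. dist z (x + y) < r \<Longrightarrow> z \<in> S"
      using \<open>open S\<close> p unfolding open_dist by (auto simp: dist_commute)
    then obtain m where m: "rad (- int m) < r"
      using rad_less by blast
    have "x' + y' \<in> S" if "x' \<in> disc x (rad (- int m))" "y' \<in> disc y (rad (- int m))" for x' y'
    proof -
      have "absv ((x' - x) + (y' - y)) \<le> rad (- int m)"
        using that absv_add_le_max[of "x' - x" "y' - y"] by (simp add: disc_def)
      then show ?thesis
        using m r[of "x' + y'"] by (simp add: dist_eq_absv algebra_simps)
    qed
    then have "disc x (rad (- int m)) \<times> disc y (rad (- int m)) \<in> ?G"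
      by (intro CollectI exI conjI refl) auto
    moreover have "p \<in> disc x (rad (- int m)) \<times> disc y (rad (- int m))"
      by (simp add: p center_in_rad_disc)
    ultimately show "p \<in> \<Union>?G"
      by (rule UnionI)
  qed
next
  show "\<Union>?G \<subseteq> {p. fst p + snd p \<in> S}"
    by auto
qed

(* The product of Borel sigma algebras need not be the Borel sigma algebra of the product;
   the countably many products of discs bridge the gap. *)
lemma measurable_add_pair: "(\<lambda>p. fst p + snd p) \<in> borel_measurable (M \<Otimes>\<^sub>M M)"
proof (rule borel_measurableI)
  fix S :: "'a set"
  assume "open S"
  let ?D = "\<lambda>m. range (\<lambda>a. disc a (rad (- int m)))"
  let ?G = "{disc x (rad (- int m)) \<times> disc y (rad (- int m)) | x y m.
        disc x (rad (- int m)) \<times> disc y (rad (- int m)) \<subseteq> {p. fst p + snd p \<in> S}}"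
  have "?G \<subseteq> (\<Union>m. (\<lambda>(E, F). E \<times> F) ` (?D m \<times> ?D m))"
    by auto
  moreover have "countable (\<Union>m. (\<lambda>(E, F). E \<times> F) ` (?D m \<times> ?D m))"
    by (intro countable_UN countable_image[of "_ \<times> _"] countable_SIGMA countable_discs) simp
  ultimately have "countable ?G"
    by (rule countable_subset)
  moreover have "?G \<subseteq> sets (M \<Otimes>\<^sub>M M)"
    by auto
  ultimately have "\<Union>?G \<in> sets (M \<Otimes>\<^sub>M M)"
    by (rule sets.countable_Union)
  then show "(\<lambda>p. fst p + snd p) -` S \<inter> space (M \<Otimes>\<^sub>M M) \<in> sets (M \<Otimes>\<^sub>M M)"
    using add_preimage_open_eq_Union_disc_products[OF \<open>open S\<close>]
    by (simp add: space_pair_measure space_M vimage_def)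
qed

lemma AE_AE_translation_invariant:
  fixes g :: "'a \<Rightarrow> complex"
  assumes [measurable]: "g \<in> borel_measurable M" "D \<in> sets M"
    and inv: "\<forall>h \<in> D. AE x in M. g (x + h) = g x"
  shows "AE x in M. AE h in M. h \<in> D \<longrightarrow> g (x + h) = g x"
proof -
  interpret sigma_finite_measure M
    by (rule sigma_finite_M)
  interpret pair_sigma_finite M M ..
  have "g \<in> borel_measurable borel"
    using assms(1) measurable_cong_sets[OF sets_M refl] by metis
  then have [measurable]: "(\<lambda>p. g (fst p + snd p)) \<in> borel_measurable (M \<Otimes>\<^sub>M M)"
    using measurable_compose[OF measurable_add_pair] by blast
  have "AE h in M. AE x in M. h \<in> D \<longrightarrow> g (x + h) = g x"
  proof (rule AE_I2)
    show "AE x in M. h \<in> D \<longrightarrow> g (x + h) = g x" for h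
      using inv by (cases "h \<in> D") auto
  qed
  moreover have "{p \<in> space (M \<Otimes>\<^sub>M M). snd p \<in> D \<longrightarrow> g (fst p + snd p) = g (fst p)}
      \<in> sets (M \<Otimes>\<^sub>M M)"
    by measurable
  ultimately show ?thesis
    using AE_commute by simp
qed

lemma translation_invariant_AE_const_on_disc:
  fixes g :: "'a \<Rightarrow> complex"
  assumes [measurable]: "g \<in> borel_measurable M"
    and inv: "\<forall>h \<in> disc 0 (rad j). AE x in M. g (x + h) = g x"
  shows "\<exists>\<gamma>. AE y in M. y \<in> disc a (rad j) \<longrightarrow> g y = \<gamma>"
proof -
  have "AE x in M. AE h in M. h \<in> disc 0 (rad j) \<longrightarrow> g (x + h) = g x"
    using inv by (intro AE_AE_translation_invariant) auto
  moreover have "\<not> (AE x in M. x \<notin> disc a (rad j))"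
  proof
    assume "AE x in M. x \<notin> disc a (rad j)"
    then have "emeasure M {x \<in> space M. x \<in> disc a (rad j)} = 0"
      by (rule emeasure_eq_0_AE)
    then show False
      using emeasure_disc[of a j] rad_pos[of j] by (simp add: space_M)
  qed
  ultimately obtain x0 where "x0 \<in> disc a (rad j)"
    and x0: "AE h in M. h \<in> disc 0 (rad j) \<longrightarrow> g (x0 + h) = g x0"
    using eventually_mono[of _ _ "\<lambda>x. x \<notin> disc a (rad j)"] by blast
  then have "AE h in M. x0 + h \<in> disc x0 (rad j) \<longrightarrow> g (x0 + h) = g x0"
    by (simp add: disc_def)
  then have "AE y in distr M M (\<lambda>h. x0 + h). y \<in> disc x0 (rad j) \<longrightarrow> g y = g x0"
    by (subst AE_distr_iff) auto
  then have "AE y in M. y \<in> disc a (rad j) \<longrightarrow> g y = g x0"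
    unfolding distr_translate disc_eq_if_mem[OF \<open>x0 \<in> disc a (rad j)\<close>] .
  then show ?thesis
    by blast
qed

lemma set_integral_translate:
  fixes f :: "'a \<Rightarrow> complex"
  assumes [measurable]: "f \<in> borel_measurable M"
  shows "(LINT y:disc 0 r|M. f (x + y)) = (LINT z:disc x r|M. f z)"
proof -
  have "(LINT z:disc x r|M. f z) = (LINT z|distr M M (\<lambda>y. x + y). indicator (disc x r) z *\<^sub>R f z)"
    by (simp add: distr_translate set_lebesgue_integral_def)
  also have "\<dots> = (LINT y|M. indicator (disc x r) (x + y) *\<^sub>R f (x + y))"
    by (rule integral_distr) auto
  also have "\<dots> = (LINT y:disc 0 r|M. f (x + y))"
    unfolding set_lebesgue_integral_def
    by (rule Bochner_Integration.integral_cong) (auto simp: indicator_def disc_def)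
  finally show ?thesis ..
qed

lemma Sop_eq_mean_on:
  assumes "f \<in> borel_measurable M"
  shows "Sop absv M q n f x = mean_on M f (disc x (rad (- int n)))"
proof -
  have "measure M (disc x (rad (- int n))) = inverse (real q ^ n)"
    using measure_disc[of x "- int n"] by (simp add: rad_def power_int_minus)
  then show ?thesis
    using assms by (simp add: Sop_def Bball_eq_disc set_integral_translate mean_on_def
      divide_inverse mult.commute)
qed

lemma Cop_Sop_commute: "Cop absv q n (Sop absv M q n f) x = Sop absv M q n (Cop absv q n f) x"
proof -
  have "indicator (disc 0 (rad (int n))) (x + y) = (indicator (disc 0 (rad (int n))) x :: complex)"
    if "y \<in> disc 0 (rad (- int n))" for y
    using that rad_mono[of "- int n" "int n"] add_mem_disc_0_iff[of y "rad (int n)" x]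
    by (simp add: disc_def indicator_def)
  then have "(LINT y:disc 0 (rad (- int n))|M. indicator (disc 0 (rad (int n))) (x + y) * f (x + y))
      = (LINT y:disc 0 (rad (- int n))|M. indicator (disc 0 (rad (int n))) x * f (x + y))"
    unfolding set_lebesgue_integral_def
    by (intro Bochner_Integration.integral_cong refl) (auto split: split_indicator)
  then show ?thesis
    by (simp add: Cop_def Sop_def Bball_eq_disc set_lebesgue_integral_def scaleR_conv_of_real
      mult.left_commute)
qed

definition fine_discs :: "nat \<Rightarrow> 'a set set" where
  "fine_discs n = (\<lambda>a. disc a (rad (- int n))) ` disc 0 (rad (int n))"

lemma finite_fine_discs: "finite (fine_discs n)"
  unfolding fine_discs_def by (rule finite_discs_in_disc) simp

lemma sets_fine_discs [measurable]: "E \<in> fine_discs n \<Longrightarrow> E \<in> sets M"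
  by (auto simp: fine_discs_def)

lemma measure_fine_disc_pos: "E \<in> fine_discs n \<Longrightarrow> measure M E > 0"
  by (auto simp: fine_discs_def measure_disc rad_pos)

lemma emeasure_fine_disc_finite: "E \<in> fine_discs n \<Longrightarrow> emeasure M E < \<infinity>"
  by (auto simp: fine_discs_def emeasure_disc)

lemma disc_in_fine_discs_iff: "disc x (rad (- int n)) \<in> fine_discs n \<longleftrightarrow> x \<in> disc 0 (rad (int n))"
proof
  assume "disc x (rad (- int n)) \<in> fine_discs n"
  then obtain a where "a \<in> disc 0 (rad (int n))" "disc x (rad (- int n)) = disc a (rad (- int n))"
    by (auto simp: fine_discs_def)
  moreover have "x \<in> disc x (rad (- int n))"
    by (rule center_in_rad_disc)
  ultimately show "x \<in> disc 0 (rad (int n))"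
    using disc_subset_disc rad_mono[of "- int n" "int n"] by blast
qed (simp add: fine_discs_def)

lemma mem_fine_disc_iff: "E \<in> fine_discs n \<Longrightarrow> x \<in> E \<longleftrightarrow> E = disc x (rad (- int n))"
  using disc_eq_if_mem center_in_rad_disc
  by (auto simp: fine_discs_def)

lemma sum_fine_discs_indicator:
  fixes h :: "'a set \<Rightarrow> complex"
  shows "(\<Sum>E\<in>fine_discs n. indicator E x * h E)
       = (if x \<in> disc 0 (rad (int n)) then h (disc x (rad (- int n))) else 0)"
proof -
  have "(\<Sum>E\<in>fine_discs n. indicator E x * h E)
      = (\<Sum>E\<in>fine_discs n. if E = disc x (rad (- int n)) then h E else 0)"
    by (intro sum.cong refl) (simp add: indicator_def mem_fine_disc_iff)
  then show ?thesis
    by (simp add: finite_fine_discs disc_in_fine_discs_iff)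
qed

lemma Cop_Sop_eq_step_function:
  assumes "f \<in> borel_measurable M"
  shows "Cop absv q n (Sop absv M q n f) x = (\<Sum>E\<in>fine_discs n. indicator E x * mean_on M f E)"
  using assms by (simp add: sum_fine_discs_indicator Cop_def Bball_eq_disc Sop_eq_mean_on)

lemma L2_Cop_Sop:
  assumes "f \<in> borel_measurable M"
  shows "L2 M (Cop absv q n (Sop absv M q n f))"
proof -
  let ?P = "Cop absv q n (Sop absv M q n f)"
  let ?B = "disc 0 (rad (int n))"
  have "?P = (\<lambda>x. \<Sum>E\<in>fine_discs n. indicator E x * mean_on M f E)"
    using Cop_Sop_eq_step_function[OF assms] by (intro ext) simp
  also have "\<dots> \<in> borel_measurable M"
    by (intro borel_measurable_sum) measurable
  finally have [measurable]: "?P \<in> borel_measurable M" .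
  define S where "S = (\<Sum>E\<in>fine_discs n. cmod (mean_on M f E))"
  have "(cmod (?P x))\<^sup>2 \<le> indicator ?B x * S\<^sup>2" for x
  proof (cases "x \<in> ?B")
    case True
    then have "cmod (?P x) \<le> S"
      using member_le_sum[of "disc x (rad (- int n))" "fine_discs n" "\<lambda>E. cmod (mean_on M f E)"]
      by (simp add: Cop_Sop_eq_step_function[OF assms] sum_fine_discs_indicator finite_fine_discs
        disc_in_fine_discs_iff S_def)
    then show ?thesis
      using True by (simp add: power_mono)
  next
    case False
    then show ?thesis
      by (simp add: Cop_def Bball_eq_disc)
  qed
  moreover have "integrable M (\<lambda>x. indicator ?B x * S\<^sup>2)"
    using emeasure_disc[of 0 "int n"] by (intro integrable_mult_left integrable_real_indicator) auto
  ultimately show ?thesis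
    unfolding L2_def by (auto intro: Bochner_Integration.integrable_bound[where f="\<lambda>x. indicator ?B x * S\<^sup>2"])
qed

lemma Cop_Sop_in_Cspace_Sspace:
  assumes "L2 M f"
  shows "Cop absv q n (Sop absv M q n f) \<in> Cspace absv M q n \<inter> Sspace absv M q n"
proof -
  have f: "f \<in> borel_measurable M"
    using assms by (simp add: L2_def)
  have "Cop absv q n (Sop absv M q n f) (x + h) = Cop absv q n (Sop absv M q n f) x"
    if "h \<in> disc 0 (rad (- int n))" for x h
  proof -
    have "disc (x + h) (rad (- int n)) = disc x (rad (- int n))"
      using that by (intro disc_eq_if_mem) (simp add: disc_def)
    moreover have "x + h \<in> disc 0 (rad (int n)) \<longleftrightarrow> x \<in> disc 0 (rad (int n))"
      using that rad_mono[of "- int n" "int n"] by (intro add_mem_disc_0_iff) (simp add: disc_def)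
    ultimately show ?thesis
      by (simp add: Cop_def Bball_eq_disc Sop_eq_mean_on[OF f] indicator_def)
  qed
  then show ?thesis
    using L2_Cop_Sop[OF f] by (auto simp: Cspace_def Sspace_def Cop_def Bball_eq_disc)
qed

lemma Cspace_Sspace_AE_step_function:
  assumes g: "g \<in> Cspace absv M q n \<inter> Sspace absv M q n"
  obtains \<gamma> where "AE x in M. g x = (\<Sum>E\<in>fine_discs n. indicator E x * \<gamma> E)"
proof -
  have [measurable]: "g \<in> borel_measurable M"
    using g by (simp add: Cspace_def L2_def)
  have "\<forall>E\<in>fine_discs n. \<exists>c. AE y in M. y \<in> E \<longrightarrow> g y = c"
    using g translation_invariant_AE_const_on_disc
    by (auto simp: fine_discs_def Sspace_def Bball_eq_disc)
  then obtain \<gamma> where "\<forall>E\<in>fine_discs n. AE y in M. y \<in> E \<longrightarrow> g y = \<gamma> E"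
    by metis
  then have "AE x in M. \<forall>E\<in>fine_discs n. x \<in> E \<longrightarrow> g x = \<gamma> E"
    by (intro AE_finite_allI finite_fine_discs) auto
  moreover have "AE x in M. x \<notin> disc 0 (rad (int n)) \<longrightarrow> g x = 0"
    using g by (simp add: Cspace_def Bball_eq_disc)
  ultimately have "AE x in M. g x = (\<Sum>E\<in>fine_discs n. indicator E x * \<gamma> E)"
    by eventually_elim
      (auto simp: sum_fine_discs_indicator disc_in_fine_discs_iff
        intro: center_in_rad_disc)
  then show ?thesis
    using that by blast
qed

lemma Cop_Sop_residual_orthogonal:
  assumes f: "L2 M f" and g: "g \<in> Cspace absv M q n \<inter> Sspace absv M q n"
  shows "L2_inner M (\<lambda>x. f x - Cop absv q n (Sop absv M q n f) x) g = 0"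
proof -
  have [measurable]: "f \<in> borel_measurable M" "Cop absv q n (Sop absv M q n f) \<in> borel_measurable M"
    using f L2_Cop_Sop by (simp_all add: L2_def)
  have [measurable]: "g \<in> borel_measurable M"
    using g by (simp add: Cspace_def L2_def)
  obtain \<gamma> where \<gamma>: "AE x in M. g x = (\<Sum>E\<in>fine_discs n. indicator E x * \<gamma> E)"
    using Cspace_Sspace_AE_step_function[OF g] .
  let ?h = "\<lambda>E x. indicator E x * ((f x - mean_on M f E) * cnj (\<gamma> E))"
  have disc_term: "integrable M (?h E) \<and> integral\<^sup>L M (?h E) = 0" if "E \<in> fine_discs n" for E
    using integral_deviation_from_mean[OF L2_integrable_indicator_mult[OF f]]
      that measure_fine_disc_pos[OF that] emeasure_fine_disc_finite[OF that]
    by simp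
  have "L2_inner M (\<lambda>x. f x - Cop absv q n (Sop absv M q n f) x) g = (\<integral>x. (\<Sum>E\<in>fine_discs n. ?h E x) \<partial>M)"
    unfolding L2_inner_def
  proof (rule integral_cong_AE)
    show "AE x in M. (f x - Cop absv q n (Sop absv M q n f) x) * cnj (g x) = (\<Sum>E\<in>fine_discs n. ?h E x)"
      using \<gamma> by eventually_elim
        (simp add: Cop_Sop_eq_step_function sum_fine_discs_indicator cnj_sum)
    show "(\<lambda>x. \<Sum>E\<in>fine_discs n. ?h E x) \<in> borel_measurable M"
      by (intro borel_measurable_sum) measurable
  qed measurable
  also have "\<dots> = (\<Sum>E\<in>fine_discs n. integral\<^sup>L M (?h E))"
    using disc_term by (intro Bochner_Integration.integral_sum) auto
  also have "\<dots> = 0"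
    using disc_term by simp
  finally show ?thesis .
qed

end

theorem mainTheorem4:
  fixes absv :: "'a::{field, metric_space} \<Rightarrow> real"
    and M :: "'a measure" and q :: nat and \<beta> :: 'a and n :: nat
  assumes "nonarch_local_field absv M q \<beta>"
    and "n \<ge> 1"
  shows "(\<forall>f. L2 M f \<longrightarrow>
            (AE x in M. Cop absv q n (Sop absv M q n f) x = Sop absv M q n (Cop absv q n f) x))
         \<and> is_orth_proj M (\<lambda>f. Cop absv q n (Sop absv M q n f))
               (Cspace absv M q n \<inter> Sspace absv M q n)"
proof -
  interpret local_field absv M q \<beta>
    by (rule local_field.intro) (rule assms(1))
  show ?thesis
    unfolding is_orth_proj_def
    using Cop_Sop_commute Cop_Sop_in_Cspace_Sspace Cop_Sop_residual_orthogonal by blast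
qed

end
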